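(* The formal power series $f$ and $g$ satisfy $$f(x;u,v,w)=\frac{x-2x^2-wx^3}{1-x}+xg(x;uv,w)+xf(x;1,v,w)+\Big(wx^2+\frac{uvwx}{1-uv}\Big)f(x;1,uv,w)-\frac{u^2v^2wx}{1-uv}f(x;1,1,uvw)$$ and $$(1-x)g(x;v,w)=\frac{x-x^2-wx^3}{1-x}+\Big(wx^2+\frac{vwx}{1-v}\Big)f(x;1,v,w)-\frac{v^2wx}{1-v}f(x;1,1,vw).$$
   Context: An ascent sequence of length $n$ is a sequence $x_1\cdots x_n$ of non-negative integers with $x_1=0$ and $x_i\le \mathrm{asc}(x_1\cdots x_{i-1})+1$ for $1<i\le n$, where $\mathrm{asc}$ counts ascents (indices $j$ with $x_j<x_{j+1}$). It avoids $021$ if there are no $i<j<k$ with $x_i<x_k<x_j$. For $n\ge1$, $0\le s\le r\le m<n$, let $a_{n,m,r,s}$ be the number of $021$-avoiding ascent sequences of length $n$ with exactly $m$ ascents, largest letter $r$ and last letter $s$. Let $A_{n,m}(u,v)=\sum_{r=0}^m\sum_{s=0}^r a_{n,m,r,s}u^sv^r$ and $B_{n,m}(v)=\sum_{r=0}^m a_{n,m,r,r}v^r$; $A_n(u,v,w)=\sum_{m=0}^{n-1}A_{n,m}(u,v)w^m$, $B_n(v,w)=\sum_{m=0}^{n-1}B_{n,m}(v)w^m$; and $f(x;u,v,w)=\sum_{n\ge1}A_n(u,v,w)x^n$, $g(x;v,w)=\sum_{n\ge1}B_n(v,w)x^n$. Thus in $f$, $x$ marks length, $u$ the last letter, $v$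 the largest letter, $w$ the number of ascents. *)

theory Defs
  imports "HOL-Computational_Algebra.Formal_Power_Series"
begin

text \<open>Ascent sequences are lists of naturals; positions are 0-based.\<close>

definition asc :: "nat list \<Rightarrow> nat" where
  "asc xs = card {j. Suc j < length xs \<and> xs ! j < xs ! Suc j}"

definition is_ascent_seq :: "nat list \<Rightarrow> bool" where
  "is_ascent_seq xs \<longleftrightarrow> xs \<noteq> [] \<and> xs ! 0 = 0 \<and>
     (\<forall>i. 0 < i \<and> i < length xs \<longrightarrow> xs ! i \<le> asc (take i xs) + 1)"

definition avoids021 :: "nat list \<Rightarrow> bool" where
  "avoids021 xs \<longleftrightarrow> \<not> (\<exists>i j k. i < j \<and> j < k \<and> k < length xs \<and>
       xs ! i < xs ! k \<and> xs ! k < xs ! j)"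

definition a_cnt :: "nat \<Rightarrow> nat \<Rightarrow> nat \<Rightarrow> nat \<Rightarrow> nat" where
  "a_cnt n m r s = card {xs. length xs = n \<and> is_ascent_seq xs \<and> avoids021 xs \<and>
       asc xs = m \<and> Max (set xs) = r \<and> last xs = s}"

definition A_poly :: "nat \<Rightarrow> real \<Rightarrow> real \<Rightarrow> real \<Rightarrow> real" where
  "A_poly n u v w = (\<Sum>m<n. (\<Sum>r\<le>m. \<Sum>s\<le>r. real (a_cnt n m r s) * u ^ s * v ^ r) * w ^ m)"

definition B_poly :: "nat \<Rightarrow> real \<Rightarrow> real \<Rightarrow> real" where
  "B_poly n v w = (\<Sum>m<n. (\<Sum>r\<le>m. real (a_cnt n m r r) * v ^ r) * w ^ m)"

text \<open>f(x;u,v,w) and g(x;v,w) as formal power series in x, with the variables u,v,w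
  specialised to real numbers (sum over n \<ge> 1).\<close>
definition f_gf :: "real \<Rightarrow> real \<Rightarrow> real \<Rightarrow> real fps" where
  "f_gf u v w = Abs_fps (\<lambda>n. if n = 0 then 0 else A_poly n u v w)"

definition g_gf :: "real \<Rightarrow> real \<Rightarrow> real fps" where
  "g_gf v w = Abs_fps (\<lambda>n. if n = 0 then 0 else B_poly n v w)"

end

theory Submission
  imports Defs
begin

text \<open>
  Let S(n) be the set of 021-avoiding ascent sequences of length n. For n \<ge> 1 every element of
  S(n+1) arises uniquely by appending a letter a to some xs \<in> S(n), and the admissible letters are
  exactly a = 0 and max xs \<le> a \<le> asc xs + 1. Hence every sequence in S(n) ends in 0 or in its
  maximum, and its maximum is at most its number of ascents.

  The coefficient A_n(u,v,w) is the sum over S(n) of u^last v^max w^asc, and B_n(v,w) the same sum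
  over the sequences ending in their maximum. Summing the weights of all one-letter extensions of a
  fixed sequence is a finite geometric sum in uv; summed over S(n) this gives, for n \<ge> 1,
    A_{n+1}(u,v,w) = A_n(1,v,w) - 1 + w/(1-uv) A_n(1,uv,w) - (uv)^2 w/(1-uv) A_n(1,1,uvw)
                     + (1-w) B_n(uv,w),
    A_{n+1}(1,v,w) - B_{n+1}(v,w) = A_n(1,v,w) - 1.
  In terms of generating functions these are two linear functional equations for f and g, and both
  identities of the theorem follow from them by ring algebra, using only (1-x)^{-1} (1-x) = 1.
\<close>

subsection \<open>Appending a letter\<close>

lemma asc_snoc:
  assumes "xs \<noteq> []"
  shows "asc (xs @ [a]) = asc xs + (if last xs < a then 1 else 0)"
proof -
  let ?old = "{j. Suc j < length xs \<and> xs ! j < xs ! Suc j}"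
  let ?new = "{j. j = length xs - 1 \<and> last xs < a}"
  have split: "{j. Suc j < length (xs @ [a]) \<and> (xs @ [a]) ! j < (xs @ [a]) ! Suc j} = ?old \<union> ?new"
  proof (rule set_eqI)
    fix j
    consider (inside) "Suc j < length xs" | (last) "j = length xs - 1" | (beyond) "length xs \<le> j"
      using assms by (cases xs) (simp, linarith)
    then show "j \<in> {j. Suc j < length (xs @ [a]) \<and> (xs @ [a]) ! j < (xs @ [a]) ! Suc j} \<longleftrightarrow>
        j \<in> ?old \<union> ?new"
    proof cases
      case last
      then show ?thesis using assms by (auto simp: nth_append last_conv_nth)
    next
      case beyond
      then show ?thesis using assms by (cases xs) auto
    qed (auto simp: nth_append)
  qed
  have "finite ?old" by (rule finite_subset[of _ "{..<length xs}"]) auto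
  moreover have "finite ?new" by (rule finite_subset[of _ "{length xs - 1}"]) auto
  moreover have "?old \<inter> ?new = {}" by auto
  moreover have "card ?new = (if last xs < a then 1 else 0)" by auto
  ultimately show ?thesis unfolding asc_def split by (simp add: card_Un_disjoint)
qed

text \<open>A nonempty sequence has fewer ascents than letters; this bounds the index m in the coefficients.\<close>

lemma asc_less_length:
  assumes "xs \<noteq> []"
  shows "asc xs < length xs"
proof -
  have "{j. Suc j < length xs \<and> xs ! j < xs ! Suc j} \<subseteq> {..<length xs - 1}" by auto
  then have "asc xs \<le> length xs - 1" unfolding asc_def by (metis card_lessThan card_mono finite_lessThan)
  with assms show ?thesis by (cases xs) auto
qed

lemma is_ascent_seq_snoc:
  assumes "xs \<noteq> []"
  shows "is_ascent_seq (xs @ [a]) \<longleftrightarrow> is_ascent_seq xs \<and> a \<le> asc xs + 1"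
proof
  assume new: "is_ascent_seq (xs @ [a])"
  have "(xs @ [a]) ! length xs \<le> asc (take (length xs) (xs @ [a])) + 1"
    using new assms unfolding is_ascent_seq_def by (metis length_append_singleton lessI length_greater_0_conv)
  then have "a \<le> asc xs + 1" by simp
  moreover have "is_ascent_seq xs"
    unfolding is_ascent_seq_def
  proof (intro conjI allI impI)
    show "xs \<noteq> []" by (rule assms)
    show "xs ! 0 = 0" using new assms unfolding is_ascent_seq_def by (simp add: nth_append)
    fix i assume i: "0 < i \<and> i < length xs"
    then have "(xs @ [a]) ! i \<le> asc (take i (xs @ [a])) + 1" using new unfolding is_ascent_seq_def by simp
    then show "xs ! i \<le> asc (take i xs) + 1" using i by (simp add: nth_append)
  qed
  ultimately show "is_ascent_seq xs \<and> a \<le> asc xs + 1" by simp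
next
  assume old: "is_ascent_seq xs \<and> a \<le> asc xs + 1"
  show "is_ascent_seq (xs @ [a])"
    unfolding is_ascent_seq_def
  proof (intro conjI allI impI)
    show "xs @ [a] \<noteq> []" by simp
    show "(xs @ [a]) ! 0 = 0" using old assms unfolding is_ascent_seq_def by (simp add: nth_append)
    fix i assume i: "0 < i \<and> i < length (xs @ [a])"
    show "(xs @ [a]) ! i \<le> asc (take i (xs @ [a])) + 1"
    proof (cases "i < length xs")
      case True
      then show ?thesis using old i unfolding is_ascent_seq_def by (simp add: nth_append)
    next
      case False
      then have "i = length xs" using i by simp
      then show ?thesis using old by simp
    qed
  qed
qed

text \<open>A new 021 occurrence must end with the appended letter \<open>a\<close>, so it is given by positions \<open>i < j\<close> of
  \<open>xs\<close> with \<open>xs ! i < a < xs ! j\<close>.\<close>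

lemma avoids021_snoc:
  "avoids021 (xs @ [a]) \<longleftrightarrow> avoids021 xs \<and>
     (\<forall>i j. i < j \<and> j < length xs \<longrightarrow> \<not> (xs ! i < a \<and> a < xs ! j))"
  unfolding avoids021_def
proof safe
  fix i j k
  assume no_new: "\<not> (\<exists>i j k. i < j \<and> j < k \<and> k < length (xs @ [a]) \<and>
      (xs @ [a]) ! i < (xs @ [a]) ! k \<and> (xs @ [a]) ! k < (xs @ [a]) ! j)"
    and "i < j" "j < k" "k < length xs" "xs ! i < xs ! k" "xs ! k < xs ! j"
  then have "i < j \<and> j < k \<and> k < length (xs @ [a]) \<and>
      (xs @ [a]) ! i < (xs @ [a]) ! k \<and> (xs @ [a]) ! k < (xs @ [a]) ! j"
    by (simp add: nth_append)
  with no_new show False by blast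
next
  fix i j
  assume no_new: "\<not> (\<exists>i j k. i < j \<and> j < k \<and> k < length (xs @ [a]) \<and>
      (xs @ [a]) ! i < (xs @ [a]) ! k \<and> (xs @ [a]) ! k < (xs @ [a]) ! j)"
    and "i < j" "j < length xs" "xs ! i < a" "a < xs ! j"
  then have "i < j \<and> j < length xs \<and> length xs < length (xs @ [a]) \<and>
      (xs @ [a]) ! i < (xs @ [a]) ! length xs \<and> (xs @ [a]) ! length xs < (xs @ [a]) ! j"
    by (simp add: nth_append)
  with no_new show False by blast
next
  fix i j k
  assume "\<not> (\<exists>i j k. i < j \<and> j < k \<and> k < length xs \<and> xs ! i < xs ! k \<and> xs ! k < xs ! j)"
    and "\<forall>i j. i < j \<and> j < length xs \<longrightarrow> \<not> (xs ! i < a \<and> a < xs ! j)"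
    and "i < j" "j < k" "k < length (xs @ [a])"
      "(xs @ [a]) ! i < (xs @ [a]) ! k" "(xs @ [a]) ! k < (xs @ [a]) ! j"
  then show False by (cases "k < length xs") (auto simp: nth_append)
qed

text \<open>Since an ascent sequence starts with 0, the only letters that avoid such a straddling pair are 0
  and the letters at least as large as the current maximum.\<close>

lemma no_pair_straddles_iff:
  fixes xs :: "nat list"
  assumes "xs \<noteq> []" and "xs ! 0 = 0"
  shows "(\<forall>i j. i < j \<and> j < length xs \<longrightarrow> \<not> (xs ! i < a \<and> a < xs ! j))
      \<longleftrightarrow> a = 0 \<or> Max (set xs) \<le> a"
proof
  assume no_pair: "\<forall>i j. i < j \<and> j < length xs \<longrightarrow> \<not> (xs ! i < a \<and> a < xs ! j)"
  have "x \<le> a" if "a \<noteq> 0" "x \<in> set xs" for x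
  proof -
    obtain j where j: "j < length xs" "xs ! j = x" using \<open>x \<in> set xs\<close> by (auto simp: in_set_conv_nth)
    show "x \<le> a"
    proof (cases "j = 0")
      case False
      then show ?thesis using no_pair[rule_format, of 0 j] j assms(2) \<open>a \<noteq> 0\<close> by auto
    qed (use j assms(2) in simp)
  qed
  then show "a = 0 \<or> Max (set xs) \<le> a" using assms(1) by auto
next
  assume a: "a = 0 \<or> Max (set xs) \<le> a"
  show "\<forall>i j. i < j \<and> j < length xs \<longrightarrow> \<not> (xs ! i < a \<and> a < xs ! j)"
  proof (intro allI impI)
    fix i j assume "i < j \<and> j < length xs"
    then have "xs ! j \<le> Max (set xs)" by (intro Max_ge) auto
    then show "\<not> (xs ! i < a \<and> a < xs ! j)" using a by auto
  qed
qed

subsection \<open>The 021-avoiding ascent sequences of a given length\<close>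

definition seqs :: "nat \<Rightarrow> nat list set" where
  "seqs n = {xs. length xs = n \<and> is_ascent_seq xs \<and> avoids021 xs}"

definition next_letters :: "nat list \<Rightarrow> nat set" where
  "next_letters xs = {a. a = 0 \<or> Max (set xs) \<le> a \<and> a \<le> asc xs + 1}"

lemma seqs_nonempty: "xs \<in> seqs n \<Longrightarrow> xs \<noteq> []"
  unfolding seqs_def is_ascent_seq_def by auto

lemma snoc_in_seqs_iff:
  assumes "xs \<noteq> []"
  shows "xs @ [a] \<in> seqs (Suc n) \<longleftrightarrow> xs \<in> seqs n \<and> a \<in> next_letters xs"
proof -
  have "xs @ [a] \<in> seqs (Suc n) \<longleftrightarrow>
      xs \<in> seqs n \<and> a \<le> asc xs + 1 \<and>
      (\<forall>i j. i < j \<and> j < length xs \<longrightarrow> \<not> (xs ! i < a \<and> a < xs ! j))"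
    unfolding seqs_def using is_ascent_seq_snoc[OF assms] avoids021_snoc[of xs a] by auto
  also have "\<dots> \<longleftrightarrow> xs \<in> seqs n \<and> a \<le> asc xs + 1 \<and> (a = 0 \<or> Max (set xs) \<le> a)"
    using no_pair_straddles_iff[OF assms] unfolding seqs_def is_ascent_seq_def by blast
  also have "\<dots> \<longleftrightarrow> xs \<in> seqs n \<and> a \<in> next_letters xs"
    unfolding next_letters_def by auto
  finally show ?thesis .
qed

lemma seqs_one: "seqs (Suc 0) = {[0]}"
  unfolding seqs_def is_ascent_seq_def avoids021_def by (auto simp: length_Suc_conv)

lemma seqs_invariants:
  assumes "xs \<in> seqs n"
  shows "last xs = 0 \<or> last xs = Max (set xs)" and "Max (set xs) \<le> asc xs"
proof -
  have "(last xs = 0 \<or> last xs = Max (set xs)) \<and> Max (set xs) \<le> asc xs"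
    using assms
  proof (induction xs arbitrary: n rule: rev_induct)
    case Nil
    then show ?case using seqs_nonempty by blast
  next
    case (snoc a xs)
    show ?case
    proof (cases "xs = []")
      case True
      moreover have "n = Suc 0" using snoc.prems True by (simp add: seqs_def)
      ultimately have "a = 0" using snoc.prems seqs_one by simp
      then show ?thesis using True by simp
    next
      case False
      then obtain k where "n = Suc k" using snoc.prems unfolding seqs_def by auto
      then have xs: "xs \<in> seqs k" and a: "a \<in> next_letters xs"
        using snoc_in_seqs_iff[OF False] snoc.prems by auto
      define r where "r = Max (set xs)"
      have last_le: "last xs \<le> r" using False unfolding r_def by simp
      have IH: "r \<le> asc xs" using snoc.IH[OF xs] unfolding r_def by simp
      have Max_snoc: "Max (set (xs @ [a])) = max a r" using False unfolding r_def by simp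
      have a_cases: "a = 0 \<or> r \<le> a \<and> a \<le> asc xs + 1" using a unfolding next_letters_def r_def by simp
      show ?thesis
        unfolding Max_snoc asc_snoc[OF False]
        using a_cases IH last_le by (cases "last xs < a") auto
    qed
  qed
  then show "last xs = 0 \<or> last xs = Max (set xs)" and "Max (set xs) \<le> asc xs" by auto
qed

lemma seqs_Suc:
  assumes "n \<ge> 1"
  shows "seqs (Suc n) = (\<lambda>(xs, a). xs @ [a]) ` (SIGMA xs:seqs n. next_letters xs)"
proof (rule set_eqI)
  fix ys
  show "ys \<in> seqs (Suc n) \<longleftrightarrow> ys \<in> (\<lambda>(xs, a). xs @ [a]) ` (SIGMA xs:seqs n. next_letters xs)"
  proof
    assume ys: "ys \<in> seqs (Suc n)"
    then have "length ys = Suc n" unfolding seqs_def by simp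
    then obtain xs a where split: "ys = xs @ [a]" and "xs \<noteq> []"
      using assms by (cases ys rule: rev_cases) force+
    then have "xs \<in> seqs n" "a \<in> next_letters xs"
      using snoc_in_seqs_iff ys by simp_all
    then show "ys \<in> (\<lambda>(xs, a). xs @ [a]) ` (SIGMA xs:seqs n. next_letters xs)"
      using split by auto
  next
    assume "ys \<in> (\<lambda>(xs, a). xs @ [a]) ` (SIGMA xs:seqs n. next_letters xs)"
    then obtain xs a where "ys = xs @ [a]" "xs \<in> seqs n" "a \<in> next_letters xs" by auto
    then show "ys \<in> seqs (Suc n)" using snoc_in_seqs_iff seqs_nonempty by simp
  qed
qed

lemma finite_next_letters: "finite (next_letters xs)"
  by (rule finite_subset[of _ "{..asc xs + 1}"]) (auto simp: next_letters_def)

lemma finite_seqs: "finite (seqs n)"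
proof (induction n)
  case 0
  then show ?case by (simp add: seqs_def is_ascent_seq_def)
next
  case (Suc n)
  then show ?case
    by (cases "n = 0") (simp_all add: seqs_one seqs_Suc finite_next_letters)
qed

lemma sum_seqs_Suc:
  assumes "n \<ge> 1"
  shows "(\<Sum>ys\<in>seqs (Suc n). F ys) = (\<Sum>xs\<in>seqs n. \<Sum>a\<in>next_letters xs. F (xs @ [a]))"
proof -
  have "inj_on (\<lambda>(xs, a). xs @ [a]) (SIGMA xs:seqs n. next_letters xs)"
    by (auto simp: inj_on_def)
  then have "(\<Sum>ys\<in>seqs (Suc n). F ys) = (\<Sum>(xs, a)\<in>(SIGMA xs:seqs n. next_letters xs). F (xs @ [a]))"
    unfolding seqs_Suc[OF assms] by (simp add: sum.reindex case_prod_unfold)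
  also have "\<dots> = (\<Sum>xs\<in>seqs n. \<Sum>a\<in>next_letters xs. F (xs @ [a]))"
    by (rule sum.Sigma[symmetric]) (auto simp: finite_seqs finite_next_letters)
  finally show ?thesis .
qed

lemma seqs_Max_zero:
  assumes "n \<ge> 1"
  shows "{xs \<in> seqs n. Max (set xs) = 0} = {replicate n 0}"
proof -
  have "xs = replicate n 0" if "xs \<in> seqs n" "Max (set xs) = 0" for xs
  proof (rule replicate_eqI)
    show "length xs = n" using that(1) by (simp add: seqs_def)
    show "y = 0" if "y \<in> set xs" for y
      using Max_ge[of "set xs" y] that \<open>Max (set xs) = 0\<close> by simp
  qed
  moreover have "replicate n 0 \<in> seqs n"
    using assms unfolding seqs_def is_ascent_seq_def avoids021_def by auto
  moreover have "Max (set (replicate n (0::nat))) = 0" using assms by simp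
  ultimately show ?thesis by blast
qed

lemma asc_replicate_zero: "asc (replicate n 0) = 0"
proof -
  have no_ascent: "{j. Suc j < n \<and> replicate n (0::nat) ! j < replicate n 0 ! Suc j} = {}" by auto
  show ?thesis unfolding asc_def length_replicate no_ascent by simp
qed

subsection \<open>Coefficients as weighted sums over sequences\<close>

definition weight :: "real \<Rightarrow> real \<Rightarrow> real \<Rightarrow> nat list \<Rightarrow> real" where
  "weight u v w xs = u ^ last xs * v ^ Max (set xs) * w ^ asc xs"

lemma triangle_sum_delta:
  fixes c :: "nat \<Rightarrow> nat \<Rightarrow> nat \<Rightarrow> 'a::comm_monoid_add"
  assumes "s0 \<le> r0" "r0 \<le> m0" "m0 < n"
  shows "(\<Sum>m<n. \<Sum>r\<le>m. \<Sum>s\<le>r. if m = m0 \<and> r = r0 \<and> s = s0 then c m r s else 0) = c m0 r0 s0"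
proof -
  have pull_out: "\<And>P A f. (\<Sum>x\<in>A. if P then f x else 0) = (if P then sum f A else (0::'a))"
    by simp
  have "\<And>m r s. (if m = m0 \<and> r = r0 \<and> s = s0 then c m r s else 0) =
      (if m = m0 then if r = r0 then if s = s0 then c m r s else 0 else 0 else 0)"
    by simp
  then show ?thesis
    using assms by (simp only: pull_out sum.delta finite_lessThan finite_atMost) simp
qed

text \<open>The range of indices suffices by the invariants.\<close>

lemma sum_by_statistics:
  fixes h :: "nat \<Rightarrow> nat \<Rightarrow> nat \<Rightarrow> real"
  shows "(\<Sum>m<n. \<Sum>r\<le>m. \<Sum>s\<le>r. real (a_cnt n m r s) * h m r s) =
         (\<Sum>xs\<in>seqs n. h (asc xs) (Max (set xs)) (last xs))"
proof -
  define stat where "stat xs = (asc xs, Max (set xs), last xs)" for xs :: "nat list"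
  have count: "real (a_cnt n m r s) * h m r s =
      (\<Sum>xs\<in>seqs n. if stat xs = (m, r, s) then h m r s else 0)" for m r s
  proof -
    have "a_cnt n m r s = card {xs \<in> seqs n. stat xs = (m, r, s)}"
      unfolding a_cnt_def seqs_def stat_def by (auto intro: arg_cong[where f = card])
    moreover have "(\<Sum>xs\<in>seqs n. if stat xs = (m, r, s) then h m r s else 0) =
        (\<Sum>xs\<in>{xs \<in> seqs n. stat xs = (m, r, s)}. h m r s)"
      by (rule sum.inter_filter[OF finite_seqs, symmetric])
    ultimately show ?thesis by simp
  qed
  have "(\<Sum>m<n. \<Sum>r\<le>m. \<Sum>s\<le>r. real (a_cnt n m r s) * h m r s) =
      (\<Sum>xs\<in>seqs n. \<Sum>m<n. \<Sum>r\<le>m. \<Sum>s\<le>r. if stat xs = (m, r, s) then h m r s else 0)"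
    unfolding count by (simp only: sum.swap[where B = "seqs n"])
  also have "\<dots> = (\<Sum>xs\<in>seqs n. h (asc xs) (Max (set xs)) (last xs))"
  proof (rule sum.cong[OF refl])
    fix xs assume xs: "xs \<in> seqs n"
    have "last xs \<le> Max (set xs)" using seqs_nonempty[OF xs] by simp
    moreover have "Max (set xs) \<le> asc xs" by (rule seqs_invariants(2)[OF xs])
    moreover have "asc xs < n" using asc_less_length[OF seqs_nonempty[OF xs]] xs by (simp add: seqs_def)
    ultimately show "(\<Sum>m<n. \<Sum>r\<le>m. \<Sum>s\<le>r. if stat xs = (m, r, s) then h m r s else 0) =
        h (asc xs) (Max (set xs)) (last xs)"
      unfolding stat_def using triangle_sum_delta[of "last xs" "Max (set xs)" "asc xs" n h]
      by (simp add: eq_commute conj_commute)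
  qed
  finally show ?thesis .
qed

lemma A_poly_eq_sum: "A_poly n u v w = (\<Sum>xs\<in>seqs n. weight u v w xs)"
proof -
  have "A_poly n u v w = (\<Sum>m<n. \<Sum>r\<le>m. \<Sum>s\<le>r. real (a_cnt n m r s) * (u ^ s * v ^ r * w ^ m))"
    unfolding A_poly_def by (simp add: sum_distrib_right mult.assoc)
  then show ?thesis unfolding sum_by_statistics weight_def by (simp add: mult_ac)
qed

lemma B_poly_eq_sum:
  "B_poly n v w = (\<Sum>xs\<in>seqs n. if last xs = Max (set xs) then weight 1 v w xs else 0)"
proof -
  have "B_poly n v w =
      (\<Sum>m<n. \<Sum>r\<le>m. \<Sum>s\<le>r. real (a_cnt n m r s) * (if s = r then v ^ r * w ^ m else 0))"
    unfolding B_poly_def by (simp add: sum_distrib_right mult.assoc if_distrib cong: if_cong)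
  then show ?thesis unfolding sum_by_statistics weight_def by (simp cong: if_cong)
qed

lemma sum_weight_nonzero_Max:
  assumes "n \<ge> 1"
  shows "(\<Sum>xs\<in>seqs n. if Max (set xs) = 0 then 0 else weight 1 v w xs) = A_poly n 1 v w - 1"
proof -
  have "(\<Sum>xs\<in>seqs n. if Max (set xs) = 0 then weight 1 v w xs else 0) =
      (\<Sum>xs\<in>{xs \<in> seqs n. Max (set xs) = 0}. weight 1 v w xs)"
    by (rule sum.inter_filter[OF finite_seqs, symmetric])
  also have "\<dots> = 1"
    unfolding seqs_Max_zero[OF assms] using assms by (simp add: weight_def asc_replicate_zero)
  finally have "(\<Sum>xs\<in>seqs n. if Max (set xs) = 0 then weight 1 v w xs else 0) = 1" .
  moreover have "A_poly n 1 v w = (\<Sum>xs\<in>seqs n. if Max (set xs) = 0 then weight 1 v w xs else 0)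
      + (\<Sum>xs\<in>seqs n. if Max (set xs) = 0 then 0 else weight 1 v w xs)"
    unfolding A_poly_eq_sum sum.distrib[symmetric] by (rule sum.cong) auto
  ultimately show ?thesis by simp
qed

subsection \<open>One-letter extensions and the two recurrences\<close>

lemma next_letters_eq:
  "next_letters xs = (if Max (set xs) = 0 then {0..asc xs + 1} else insert 0 {Max (set xs)..asc xs + 1})"
  unfolding next_letters_def by auto

lemma weight_snoc:
  assumes "xs \<noteq> []"
  shows "weight u v w (xs @ [a]) =
    u ^ a * v ^ max a (Max (set xs)) * w ^ (asc xs + (if last xs < a then 1 else 0))"
  using assms by (simp add: weight_def asc_snoc)

text \<open>Summing the weights of all extensions of one sequence: the letters from the maximum \<open>r\<close> upwards
  contribute powers of \<open>uv\<close>, and appending 0 contributes \<open>v\<^sup>r w\<^sup>m\<close> unless \<open>r = 0\<close> (then 0 is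
  already among the former letters).\<close>

lemma extension_sum:
  assumes xs: "xs \<in> seqs n"
  defines "r \<equiv> Max (set xs)" and "m \<equiv> asc xs" and "s \<equiv> last xs"
  shows "(\<Sum>a\<in>next_letters xs. weight u v w (xs @ [a])) =
    (\<Sum>a=r..m+1. (u * v) ^ a * w ^ (m + (if s < a then 1 else 0))) + (if r = 0 then 0 else v ^ r * w ^ m)"
proof -
  have ne: "xs \<noteq> []" by (rule seqs_nonempty[OF xs])
  have weight: "weight u v w (xs @ [a]) = (u * v) ^ a * w ^ (m + (if s < a then 1 else 0))"
    if "r \<le> a" for a
    using that unfolding weight_snoc[OF ne] r_def m_def s_def by (simp add: power_mult_distrib)
  show ?thesis
  proof (cases "r = 0")
    case True
    then show ?thesis
      unfolding next_letters_eq r_def[symmetric] m_def[symmetric] using weight by simp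
  next
    case False
    have "weight u v w (xs @ [0]) = v ^ r * w ^ m"
      unfolding weight_snoc[OF ne] r_def m_def by simp
    then show ?thesis
      unfolding next_letters_eq r_def[symmetric] m_def[symmetric] using False weight
      by (simp add: add.commute)
  qed
qed

text \<open>The record part is a geometric sum, except that the first term carries no new ascent when the
  sequence already ends in its maximum.\<close>

lemma geometric_extension_sum:
  fixes q w :: "'a::field"
  assumes "s \<le> r" "r \<le> m" "q \<noteq> 1"
  shows "(\<Sum>a=r..m+1. q ^ a * w ^ (m + (if s < a then 1 else 0))) =
    w / (1 - q) * (q ^ r * w ^ m) - q\<^sup>2 * w / (1 - q) * (q * w) ^ m
    + (if s = r then (1 - w) * (q ^ r * w ^ m) else 0)"
proof -
  define G where "G = (\<Sum>a=r..m+1. q ^ a)"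
  have "(1 - q) * G = q ^ r - q ^ Suc (m + 1)"
    unfolding G_def by (rule sum_gp_multiplied) (use assms(2) in simp)
  then have G: "G = (q ^ r - q ^ Suc (m + 1)) / (1 - q)"
    using assms(3) by (simp add: eq_divide_eq mult.commute)
  have tail: "(\<Sum>a=Suc r..m+1. q ^ a * w ^ (m + (if s < a then 1 else 0))) = w ^ (m + 1) * (G - q ^ r)"
  proof -
    have "(\<Sum>a=Suc r..m+1. q ^ a * w ^ (m + (if s < a then 1 else 0))) = (\<Sum>a=Suc r..m+1. w ^ (m + 1) * q ^ a)"
      using assms(1) by (intro sum.cong) auto
    also have "\<dots> = w ^ (m + 1) * (\<Sum>a=Suc r..m+1. q ^ a)"
      by (rule sum_distrib_left[symmetric])
    also have "(\<Sum>a=Suc r..m+1. q ^ a) = G - q ^ r"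
      unfolding G_def using assms(2) by (simp add: sum.atLeast_Suc_atMost)
    finally show ?thesis .
  qed
  have "(\<Sum>a=r..m+1. q ^ a * w ^ (m + (if s < a then 1 else 0))) =
      q ^ r * w ^ (m + (if s < r then 1 else 0)) +
      (\<Sum>a=Suc r..m+1. q ^ a * w ^ (m + (if s < a then 1 else 0)))"
    by (rule sum.atLeast_Suc_atMost) (use assms(2) in simp)
  also have "\<dots> = q ^ r * w ^ (m + (if s < r then 1 else 0)) + w ^ (m + 1) * (G - q ^ r)"
    unfolding tail ..
  also have "\<dots> = w ^ (m + 1) * G + (q ^ r * w ^ (m + (if s < r then 1 else 0)) - w ^ (m + 1) * q ^ r)"
    by (simp add: algebra_simps)
  also have "w ^ (m + 1) * G = w / (1 - q) * (q ^ r * w ^ m) - q\<^sup>2 * w / (1 - q) * (q * w) ^ m"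
  proof -
    have "w ^ (m + 1) * (q ^ r - q ^ Suc (m + 1)) = w * (q ^ r * w ^ m) - q\<^sup>2 * w * (q * w) ^ m"
      by (simp add: algebra_simps power_mult_distrib power2_eq_square)
    then have "w ^ (m + 1) * G = (w * (q ^ r * w ^ m) - q\<^sup>2 * w * (q * w) ^ m) / (1 - q)"
      unfolding G by (metis times_divide_eq_right)
    then show ?thesis by (simp add: diff_divide_distrib)
  qed
  also have "q ^ r * w ^ (m + (if s < r then 1 else 0)) - w ^ (m + 1) * q ^ r =
      (if s = r then (1 - w) * (q ^ r * w ^ m) else 0)"
    using assms(1) by (auto simp: algebra_simps)
  finally show ?thesis .
qed

lemma extension_sum_closed_form:
  fixes u v w :: real
  assumes xs: "xs \<in> seqs n" and q: "u * v \<noteq> 1"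
  shows "(\<Sum>a\<in>next_letters xs. weight u v w (xs @ [a])) =
    w / (1 - u * v) * weight 1 (u * v) w xs - (u * v)\<^sup>2 * w / (1 - u * v) * weight 1 1 (u * v * w) xs
    + (1 - w) * (if last xs = Max (set xs) then weight 1 (u * v) w xs else 0)
    + (if Max (set xs) = 0 then 0 else weight 1 v w xs)"
proof -
  have "last xs \<le> Max (set xs)" using seqs_nonempty[OF xs] by simp
  then have "(\<Sum>a=Max (set xs)..asc xs+1. (u * v) ^ a * w ^ (asc xs + (if last xs < a then 1 else 0))) =
      w / (1 - u * v) * ((u * v) ^ Max (set xs) * w ^ asc xs) - (u * v)\<^sup>2 * w / (1 - u * v) * (u * v * w) ^ asc xs
      + (if last xs = Max (set xs) then (1 - w) * ((u * v) ^ Max (set xs) * w ^ asc xs) else 0)"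
    using seqs_invariants(2)[OF xs] q by (rule geometric_extension_sum)
  then show ?thesis
    unfolding extension_sum[OF xs] by (simp add: weight_def)
qed

lemma A_poly_Suc:
  fixes u v w :: real
  assumes n: "n \<ge> 1" and q: "u * v \<noteq> 1"
  shows "A_poly (Suc n) u v w = A_poly n 1 v w - 1
    + w / (1 - u * v) * A_poly n 1 (u * v) w - (u * v)\<^sup>2 * w / (1 - u * v) * A_poly n 1 1 (u * v * w)
    + (1 - w) * B_poly n (u * v) w"
proof -
  have "A_poly (Suc n) u v w = (\<Sum>xs\<in>seqs n. \<Sum>a\<in>next_letters xs. weight u v w (xs @ [a]))"
    unfolding A_poly_eq_sum by (rule sum_seqs_Suc[OF n])
  also have "\<dots> = (\<Sum>xs\<in>seqs n.
      w / (1 - u * v) * weight 1 (u * v) w xs - (u * v)\<^sup>2 * w / (1 - u * v) * weight 1 1 (u * v * w) xs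
      + (1 - w) * (if last xs = Max (set xs) then weight 1 (u * v) w xs else 0)
      + (if Max (set xs) = 0 then 0 else weight 1 v w xs))"
    using extension_sum_closed_form[OF _ q] by (rule sum.cong[OF refl])
  also have "\<dots> = w / (1 - u * v) * A_poly n 1 (u * v) w - (u * v)\<^sup>2 * w / (1 - u * v) * A_poly n 1 1 (u * v * w)
      + (1 - w) * B_poly n (u * v) w + (\<Sum>xs\<in>seqs n. if Max (set xs) = 0 then 0 else weight 1 v w xs)"
    unfolding A_poly_eq_sum B_poly_eq_sum by (simp add: sum.distrib sum_subtractf sum_distrib_left)
  also have "(\<Sum>xs\<in>seqs n. if Max (set xs) = 0 then 0 else weight 1 v w xs) = A_poly n 1 v w - 1"
    by (rule sum_weight_nonzero_Max[OF n])
  finally show ?thesis by simp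
qed

text \<open>An extension does not end in its maximum only when 0 is appended to a sequence with positive
  maximum, and then the weight at \<open>u = 1\<close> is unchanged.\<close>

lemma extension_sum_last_below_Max:
  assumes xs: "xs \<in> seqs n"
  shows "(\<Sum>a\<in>next_letters xs. if last (xs @ [a]) = Max (set (xs @ [a])) then 0 else weight 1 v w (xs @ [a]))
    = (if Max (set xs) = 0 then 0 else weight 1 v w xs)"
proof -
  have ne: "xs \<noteq> []" by (rule seqs_nonempty[OF xs])
  have ends_in_Max: "(if last (xs @ [a]) = Max (set (xs @ [a])) then 0 else weight 1 v w (xs @ [a])) = 0"
    if "Max (set xs) \<le> a" for a
    using that ne by simp
  show ?thesis
  proof (cases "Max (set xs) = 0")
    case True
    then show ?thesis unfolding next_letters_eq using ends_in_Max by simp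
  next
    case False
    then have "(\<Sum>a\<in>next_letters xs. if last (xs @ [a]) = Max (set (xs @ [a])) then 0 else weight 1 v w (xs @ [a]))
        = weight 1 v w (xs @ [0])"
      unfolding next_letters_eq using ends_in_Max ne by simp
    also have "\<dots> = weight 1 v w xs" using ne by (simp add: weight_def asc_snoc)
    finally show ?thesis using False by simp
  qed
qed

lemma A_poly_Suc_minus_B_poly:
  assumes n: "n \<ge> 1"
  shows "A_poly (Suc n) 1 v w - B_poly (Suc n) v w = A_poly n 1 v w - 1"
proof -
  have "A_poly (Suc n) 1 v w - B_poly (Suc n) v w =
      (\<Sum>ys\<in>seqs (Suc n). if last ys = Max (set ys) then 0 else weight 1 v w ys)"
    unfolding A_poly_eq_sum B_poly_eq_sum sum_subtractf[symmetric] by (rule sum.cong) auto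
  also have "\<dots> = (\<Sum>xs\<in>seqs n. if Max (set xs) = 0 then 0 else weight 1 v w xs)"
    unfolding sum_seqs_Suc[OF n] using extension_sum_last_below_Max by (rule sum.cong[OF refl])
  finally show ?thesis using sum_weight_nonzero_Max[OF n] by simp
qed

subsection \<open>Generating functions\<close>

unbundle fps_syntax

lemma A_poly_zero: "A_poly 0 u v w = 0"
  unfolding A_poly_def by simp

lemma B_poly_zero: "B_poly 0 v w = 0"
  unfolding B_poly_def by simp

lemma f_gf_nth: "f_gf u v w $ n = A_poly n u v w"
  unfolding f_gf_def by (simp add: A_poly_zero)

lemma g_gf_nth: "g_gf v w $ n = B_poly n v w"
  unfolding g_gf_def by (simp add: B_poly_zero)

lemma A_poly_one: "A_poly (Suc 0) u v w = 1"
  unfolding A_poly_eq_sum seqs_one by (simp add: weight_def asc_def)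

lemma B_poly_one: "B_poly (Suc 0) v w = 1"
  unfolding B_poly_eq_sum seqs_one by (simp add: weight_def asc_def)

text \<open>\<open>x\<^sup>2/(1-x)\<close> has coefficient 1 from degree 2 on; it absorbs the constants \<open>-1\<close> of the recurrences.\<close>

lemma fps_X2_geometric_nth:
  "(fps_X ^ 2 * inverse (1 - fps_X) :: 'a::division_ring fps) $ n = (if 2 \<le> n then 1 else 0)"
  by (simp add: fps_inverse_one_minus_fps_X fps_X_power_mult_nth)

text \<open>Coefficients are compared separately in degrees 0 and 1, where the recurrences do not apply.\<close>

lemma coefficient_cases:
  fixes N :: nat
  obtains (zero) "N = 0" | (one) "N = 1" | (step) n where "N = Suc n" "n \<ge> 1"
proof (cases N)
  case (Suc n)
  then show ?thesis using that by (cases n) auto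
qed (use that in auto)

lemma f_gf_functional_equation:
  fixes u v w q :: real
  assumes uv: "u * v = q" and q: "q \<noteq> 1"
  shows "f_gf u v w = fps_X - fps_X ^ 2 * inverse (1 - fps_X)
    + fps_X * (f_gf 1 v w + fps_const (w / (1 - q)) * f_gf 1 q w
      - fps_const (q\<^sup>2 * w / (1 - q)) * f_gf 1 1 (q * w) + fps_const (1 - w) * g_gf q w)"
proof (rule fps_ext)
  fix N
  show "f_gf u v w $ N = (fps_X - fps_X ^ 2 * inverse (1 - fps_X)
    + fps_X * (f_gf 1 v w + fps_const (w / (1 - q)) * f_gf 1 q w
      - fps_const (q\<^sup>2 * w / (1 - q)) * f_gf 1 1 (q * w) + fps_const (1 - w) * g_gf q w)) $ N"
  proof (cases N rule: coefficient_cases)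
    case zero
    then show ?thesis by (simp add: f_gf_nth A_poly_zero)
  next
    case one
    then show ?thesis by (simp add: f_gf_nth g_gf_nth fps_X2_geometric_nth A_poly_one A_poly_zero B_poly_zero)
  next
    case (step n)
    then show ?thesis
      using A_poly_Suc[of n u v w] uv q by (simp add: f_gf_nth g_gf_nth fps_X2_geometric_nth)
  qed
qed

lemma f_gf_g_gf_relation:
  "(1 - fps_X) * f_gf 1 v w = g_gf v w - fps_X ^ 2 * inverse (1 - fps_X)"
proof (rule fps_ext)
  fix N
  have difference: "(1 - fps_X) * f_gf 1 v w = f_gf 1 v w - fps_X * f_gf 1 v w"
    by (simp add: algebra_simps)
  have "(f_gf 1 v w - fps_X * f_gf 1 v w) $ N = (g_gf v w - fps_X ^ 2 * inverse (1 - fps_X)) $ N"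
  proof (cases N rule: coefficient_cases)
    case zero
    then show ?thesis by (simp add: f_gf_nth g_gf_nth A_poly_zero B_poly_zero)
  next
    case one
    then show ?thesis
      by (simp add: f_gf_nth g_gf_nth fps_X2_geometric_nth A_poly_one B_poly_one A_poly_zero)
  next
    case (step n)
    then show ?thesis
      using A_poly_Suc_minus_B_poly[of n v w] by (simp add: f_gf_nth g_gf_nth fps_X2_geometric_nth)
  qed
  then show "((1 - fps_X) * f_gf 1 v w) $ N = (g_gf v w - fps_X ^ 2 * inverse (1 - fps_X)) $ N"
    unfolding difference .
qed

lemma eliminate_for_f:
  fixes X D F F1 F2 F3 G c1 c2 c3 w :: "'a::idom"
  assumes "F = X - X\<^sup>2 * D + X * (F1 + c1 * F2 - c2 * F3 + (1 - w) * G)"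
    and "(1 - X) * F2 = G - X\<^sup>2 * D" and "D * (1 - X) = 1" and "c1 = c3 + w"
  shows "F = (X - 2 * X\<^sup>2 - w * X ^ 3) * D + X * G + X * F1 + (w * X\<^sup>2 + c3 * X) * F2 - c2 * X * F3"
  using assms by algebra

lemma eliminate_for_g:
  fixes X D F1 F3 G c1 c2 c3 w :: "'a::idom"
  assumes "F1 = X - X\<^sup>2 * D + X * (F1 + c1 * F1 - c2 * F3 + (1 - w) * G)"
    and "(1 - X) * F1 = G - X\<^sup>2 * D" and "D * (1 - X) = 1" and "c1 = c3 + w"
  shows "(1 - X) * G = (X - X\<^sup>2 - w * X ^ 3) * D + (w * X\<^sup>2 + c3 * X) * F1 - c2 * X * F3"
  using assms by algebra

lemma inverse_one_minus_fps_X_cancel: "inverse (1 - fps_X) * (1 - fps_X :: 'a::field fps) = 1"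
  by (simp add: inverse_mult_eq_1)

lemma fps_const_split:
  fixes q w :: "'a::field"
  assumes "q \<noteq> 1"
  shows "fps_const (w / (1 - q)) = fps_const (q * w / (1 - q)) + fps_const w"
  using assms by (simp add: field_simps)

lemma fps_const_one_minus: "fps_const (1 - w :: 'a::ring_1) = 1 - fps_const w"
  by (metis fps_const_1_eq_1 fps_const_sub)

lemma f_gf_equation:
  fixes u v w :: real
  assumes q: "u * v \<noteq> 1"
  shows "f_gf u v w =
        (fps_X - 2 * fps_X ^ 2 - fps_const w * fps_X ^ 3) * inverse (1 - fps_X)
        + fps_X * g_gf (u * v) w
        + fps_X * f_gf 1 v w
        + (fps_const w * fps_X ^ 2 + fps_const (u * v * w / (1 - u * v)) * fps_X) * f_gf 1 (u * v) w
        - fps_const (u ^ 2 * v ^ 2 * w / (1 - u * v)) * fps_X * f_gf 1 1 (u * v * w)"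
  using f_gf_functional_equation[OF refl q, of w]
  by (intro eliminate_for_f[OF _ f_gf_g_gf_relation inverse_one_minus_fps_X_cancel fps_const_split[OF q]])
     (simp add: power_mult_distrib fps_const_one_minus)

lemma g_gf_equation:
  fixes v w :: real
  assumes v: "v \<noteq> 1"
  shows "(1 - fps_X) * g_gf v w =
        (fps_X - fps_X ^ 2 - fps_const w * fps_X ^ 3) * inverse (1 - fps_X)
        + (fps_const w * fps_X ^ 2 + fps_const (v * w / (1 - v)) * fps_X) * f_gf 1 v w
        - fps_const (v ^ 2 * w / (1 - v)) * fps_X * f_gf 1 1 (v * w)"
  using f_gf_functional_equation[of 1 v v w] v
  by (intro eliminate_for_g[OF _ f_gf_g_gf_relation inverse_one_minus_fps_X_cancel fps_const_split[OF v]])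
     (simp add: fps_const_one_minus)

theorem lemma3:
  shows "(\<forall>u v w :: real. u * v \<noteq> 1 \<longrightarrow>
      f_gf u v w =
        (fps_X - 2 * fps_X ^ 2 - fps_const w * fps_X ^ 3) * inverse (1 - fps_X)
        + fps_X * g_gf (u * v) w
        + fps_X * f_gf 1 v w
        + (fps_const w * fps_X ^ 2 + fps_const (u * v * w / (1 - u * v)) * fps_X) * f_gf 1 (u * v) w
        - fps_const (u ^ 2 * v ^ 2 * w / (1 - u * v)) * fps_X * f_gf 1 1 (u * v * w))
    \<and> (\<forall>v w :: real. v \<noteq> 1 \<longrightarrow>
      (1 - fps_X) * g_gf v w =
        (fps_X - fps_X ^ 2 - fps_const w * fps_X ^ 3) * inverse (1 - fps_X)
        + (fps_const w * fps_X ^ 2 + fps_const (v * w / (1 - v)) * fps_X) * f_gf 1 v w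
        - fps_const (v ^ 2 * w / (1 - v)) * fps_X * f_gf 1 1 (v * w))"
  using f_gf_equation g_gf_equation by blast

end
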